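(* For every DBI normal formula $\varphi$ and every pointed Kripke model $(\mathcal{M},v)$, the pointed update of $(\mathcal{M},v)$ with $(\mathcal{U}_\varphi,0)$ is defined and $\mathcal{M}\odot\mathcal{U}_\varphi,(v,0)\vDash\varphi$.
   Context: Agents $\mathcal{A}=\{1,\dots,n\}$, $n>1$; language $\mathcal{L}$: $\varphi ::= p \mid \neg\varphi \mid (\varphi\wedge\varphi)\mid B_i\varphi$, with $\top$ the usual tautology. Kripke model $\mathcal{M}=\langle S,R,V\rangle$ (nonempty $S$, $R_i\subseteq S\times S$, $V:\mathit{Prop}\to 2^S$), standard truth ($\mathcal{M},w\vDash B_i\varphi$ iff $\varphi$ holds at all $R_i$-successors). Action model $\mathcal{U}=\langle E,Q,\mathsf{pre}\rangle$ (nonempty $E$, $Q_i\subseteq E\times E$, $\mathsf{pre}:E\to\mathcal{L}$). Pointed update of $(\mathcal{M},w)$ with $(\mathcal{U},\alpha)$, defined iff $\mathcal{M},w\vDash\mathsf{pre}(\alpha)$: with $T=\{(x,\beta)\in S\times E\mid\mathcal{M},x\vDash\mathsf{pre}(\beta)\}$, $\mathcal{M}\odot\mathcal{U}=\langle S^{\mathcal U},R^{\mathcal U},V^{\mathcal U}\rangle$, where $S^{\mathcal U}$ is the smallest subset of $T$ containing $(w,\alpha)$ closed under: $(x,\beta)\in S^{\mathcal U}$, $(u,\gamma)\in T$, $xR_iu$, $\beta Q_i\gamma$ imply $(u,\gamma)\in S^{\mathcal U}$; $R^{\mathcal U}_i$ relates $(x,\beta),(u,\gamma)\in S^{\mathcal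 U}$ iff $xR_iu$ and $\beta Q_i\gamma$; $V^{\mathcal U}(p)=\{(x,\beta)\in S^{\mathcal U}\mid x\in V(p)\}$. The resulting pointed model is $(\mathcal{M}\odot\mathcal{U},(w,\alpha))$. Target agents: $\mathsf{ta}(p)=\varnothing$, $\mathsf{ta}(\neg\phi)=\mathsf{ta}(\phi)$, $\mathsf{ta}(\phi\wedge\psi)=\mathsf{ta}(\phi)\cup\mathsf{ta}(\psi)$, $\mathsf{ta}(B_i\phi)=\{i\}$. DBI formulas: $\varphi ::= B_i\xi \mid B_i(\xi\wedge\varphi)\mid(\varphi\wedge\varphi)\mid B_i\varphi$ with $\xi$ purely propositional. DBI normal: $B_i\xi$ always; $B_i\varphi$ and $B_i(\xi\wedge\varphi)$ iff $\varphi$ is DBI normal and $i\notin\mathsf{ta}(\varphi)$; $\varphi\wedge\psi$ iff both are DBI normal and $\mathsf{ta}(\varphi)\cap\mathsf{ta}(\psi)=\varnothing$. The action model $\mathcal{U}_\varphi=\langle E^\varphi,Q^\varphi,\mathsf{pre}^\varphi\rangle$ for DBI normal $\varphi$ is defined recursively; always $E^\varphi=\{0,-1\}\sqcup D^\varphi$ with $\varnothing\neq D^\varphi\subseteq\{1,2,\dots\}$, $\mathsf{pre}^\varphi(0)=\mathsf{pre}^\varphi(-1)=\top$. For a relation $Q_j$ write $\underline{Q}_j=Q_j\cap((E\setminus\{0\})\times(E\setminus\{0\}))$. (1) $\varphi=B_i\xi$, $\xi$ propositional: $D^\varphi=\{m\}$, $\mathsf{pre}(m)=\xi$, $Q_j=\{(0,-1),(m,-1),(-1,-1)\}$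 for $j\neq i$, $Q_i=\{(0,m),(m,m),(-1,-1)\}$. (2) $\varphi=B_i\psi$, $\psi$ DBI normal: with a fresh $m\geq1$, $m\notin D^\psi$, let $D^\varphi=D^\psi\sqcup\{m\}$, $\mathsf{pre}^\varphi$ extends $\mathsf{pre}^\psi$ by $\mathsf{pre}^\varphi(m)=\top$, $Q^\varphi_j=\underline{Q}^\psi_j\cup\{(0,-1)\}\cup\{(m,k)\mid(0,k)\in Q^\psi_j\}$ for $j\neq i$, and $Q^\varphi_i=\underline{Q}^\psi_i\cup\{(0,m),(m,m)\}$. (3) $\varphi=B_i(\xi\wedge\psi)$, $\xi$ propositional, $\psi$ DBI normal: as in (2) except $\mathsf{pre}^\varphi(m)=\xi$. (4) $\varphi=\psi\wedge\theta$ with $\psi,\theta$ DBI normal: rename so that $D^\psi\cap D^\theta=\varnothing$; $D^\varphi=D^\psi\sqcup D^\theta$, $\mathsf{pre}^\varphi=\mathsf{pre}^\psi\cup\mathsf{pre}^\theta$, and for every $j$: $Q^\varphi_j=\underline{Q}^\psi_j\cup\underline{Q}^\theta_j\cup\{(0,k)\mid (0,k)\in Q^\psi_j\cup Q^\theta_j,\ k\in D^\psi\sqcup D^\theta\}\cup\{(0,-1)\mid \text{there is no } k\in D^\psi\sqcup D^\theta \text{ with } (0,k)\in Q^\psi_j\cup Q^\theta_j\}$. *)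

theory Defs
  imports Main "HOL-Library.Cardinality"
begin

datatype ('ag, 'p) fm =
    Atom 'p
  | Neg "('ag, 'p) fm"
  | Conj "('ag, 'p) fm" "('ag, 'p) fm"
  | Bel 'ag "('ag, 'p) fm"

definition top :: "('ag, 'p) fm" where
  "top = Neg (Conj (Atom undefined) (Neg (Atom undefined)))"

primrec propositional :: "('ag, 'p) fm \<Rightarrow> bool" where
  "propositional (Atom p) = True"
| "propositional (Neg f) = propositional f"
| "propositional (Conj f g) = (propositional f \<and> propositional g)"
| "propositional (Bel i f) = False"

primrec ta :: "('ag, 'p) fm \<Rightarrow> 'ag set" where
  "ta (Atom p) = {}"
| "ta (Neg f) = ta f"
| "ta (Conj f g) = ta f \<union> ta g"
| "ta (Bel i f) = {i}"

inductive dbi_normal :: "('ag, 'p) fm \<Rightarrow> bool" where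
  nprop: "propositional \<xi> \<Longrightarrow> dbi_normal (Bel i \<xi>)"
| bel: "dbi_normal \<phi> \<Longrightarrow> i \<notin> ta \<phi> \<Longrightarrow> dbi_normal (Bel i \<phi>)"
| belc: "propositional \<xi> \<Longrightarrow> dbi_normal \<phi> \<Longrightarrow> i \<notin> ta \<phi>
          \<Longrightarrow> dbi_normal (Bel i (Conj \<xi> \<phi>))"
| conj: "dbi_normal \<phi> \<Longrightarrow> dbi_normal \<psi> \<Longrightarrow> ta \<phi> \<inter> ta \<psi> = {}
          \<Longrightarrow> dbi_normal (Conj \<phi> \<psi>)"

record ('ag, 's, 'p) kmodel =
  St :: "'s set"
  Rel :: "'ag \<Rightarrow> ('s \<times> 's) set"
  Val :: "'p \<Rightarrow> 's set"

definition kripke :: "('ag, 's, 'p) kmodel \<Rightarrow> bool" where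
  "kripke M \<longleftrightarrow> St M \<noteq> {} \<and> (\<forall>i. Rel M i \<subseteq> St M \<times> St M) \<and> (\<forall>p. Val M p \<subseteq> St M)"

primrec sat :: "('ag, 's, 'p) kmodel \<Rightarrow> 's \<Rightarrow> ('ag, 'p) fm \<Rightarrow> bool" where
  "sat M w (Atom p) = (w \<in> Val M p)"
| "sat M w (Neg f) = (\<not> sat M w f)"
| "sat M w (Conj f g) = (sat M w f \<and> sat M w g)"
| "sat M w (Bel i f) = (\<forall>u. (w, u) \<in> Rel M i \<longrightarrow> sat M u f)"

record ('ag, 'e, 'p) amodel =
  AE :: "'e set"
  AQ :: "'ag \<Rightarrow> ('e \<times> 'e) set"
  Apre :: "'e \<Rightarrow> ('ag, 'p) fm"

definition upd_T :: "('ag, 's, 'p) kmodel \<Rightarrow> ('ag, 'e, 'p) amodel \<Rightarrow> ('s \<times> 'e) set" where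
  "upd_T M U = {(x, \<beta>). x \<in> St M \<and> \<beta> \<in> AE U \<and> sat M x (Apre U \<beta>)}"

inductive_set upd_states :: "('ag, 's, 'p) kmodel \<Rightarrow> ('ag, 'e, 'p) amodel \<Rightarrow> 's \<Rightarrow> 'e
    \<Rightarrow> ('s \<times> 'e) set"
  for M U w \<alpha> where
  base: "(w, \<alpha>) \<in> upd_T M U \<Longrightarrow> (w, \<alpha>) \<in> upd_states M U w \<alpha>"
| step: "(x, \<beta>) \<in> upd_states M U w \<alpha> \<Longrightarrow> (u, \<gamma>) \<in> upd_T M U \<Longrightarrow> (x, u) \<in> Rel M i
          \<Longrightarrow> (\<beta>, \<gamma>) \<in> AQ U i \<Longrightarrow> (u, \<gamma>) \<in> upd_states M U w \<alpha>"

definition upd_defined :: "('ag, 's, 'p) kmodel \<Rightarrow> ('ag, 'e, 'p) amodel \<Rightarrow> 's \<Rightarrow> 'e \<Rightarrow> bool" where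
  "upd_defined M U w \<alpha> \<longleftrightarrow> sat M w (Apre U \<alpha>)"

definition upd :: "('ag, 's, 'p) kmodel \<Rightarrow> ('ag, 'e, 'p) amodel \<Rightarrow> 's \<Rightarrow> 'e
    \<Rightarrow> ('ag, 's \<times> 'e, 'p) kmodel" where
  "upd M U w \<alpha> =
    \<lparr> St = upd_states M U w \<alpha>,
      Rel = (\<lambda>i. {((x, \<beta>), (u, \<gamma>)). (x, \<beta>) \<in> upd_states M U w \<alpha> \<and> (u, \<gamma>) \<in> upd_states M U w \<alpha>
                    \<and> (x, u) \<in> Rel M i \<and> (\<beta>, \<gamma>) \<in> AQ U i}),
      Val = (\<lambda>p. {(x, \<beta>). (x, \<beta>) \<in> upd_states M U w \<alpha> \<and> x \<in> Val M p}) \<rparr>"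

definition under :: "(int \<times> int) set \<Rightarrow> (int \<times> int) set" where
  "under Q = Q \<inter> ({k. k \<noteq> 0} \<times> {k. k \<noteq> 0})"

text \<open>mkU phi D Q pre: (E = {0,-1} \<union> D, Q, pre) is an admissible U_phi
  (all admissible choices of fresh event names are allowed).\<close>
inductive mkU :: "('ag, 'p) fm \<Rightarrow> int set \<Rightarrow> ('ag \<Rightarrow> (int \<times> int) set) \<Rightarrow> (int \<Rightarrow> ('ag, 'p) fm)
    \<Rightarrow> bool" where
  ubase: "propositional \<xi> \<Longrightarrow> m \<ge> 1 \<Longrightarrow>
    mkU (Bel i \<xi>) {m}
      (\<lambda>j. if j = i then {(0, m), (m, m), (-1, -1)} else {(0, -1), (m, -1), (-1, -1)})
      ((\<lambda>_. top)(m := \<xi>))"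
| bel: "dbi_normal \<psi> \<Longrightarrow> mkU \<psi> D Q P \<Longrightarrow> m \<ge> 1 \<Longrightarrow> m \<notin> D \<Longrightarrow>
    mkU (Bel i \<psi>) (insert m D)
      (\<lambda>j. if j = i then under (Q i) \<union> {(0, m), (m, m)}
           else under (Q j) \<union> {(0, -1)} \<union> {(m, k) | k. (0, k) \<in> Q j})
      (P(m := top))"
| belc: "propositional \<xi> \<Longrightarrow> dbi_normal \<psi> \<Longrightarrow> mkU \<psi> D Q P \<Longrightarrow> m \<ge> 1 \<Longrightarrow> m \<notin> D \<Longrightarrow>
    mkU (Bel i (Conj \<xi> \<psi>)) (insert m D)
      (\<lambda>j. if j = i then under (Q i) \<union> {(0, m), (m, m)}
           else under (Q j) \<union> {(0, -1)} \<union> {(m, k) | k. (0, k) \<in> Q j})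
      (P(m := \<xi>))"
| conj: "dbi_normal \<psi> \<Longrightarrow> dbi_normal \<theta> \<Longrightarrow> mkU \<psi> D1 Q1 P1 \<Longrightarrow> mkU \<theta> D2 Q2 P2 \<Longrightarrow>
    D1 \<inter> D2 = {} \<Longrightarrow>
    mkU (Conj \<psi> \<theta>) (D1 \<union> D2)
      (\<lambda>j. under (Q1 j) \<union> under (Q2 j)
           \<union> {(0, k) | k. (0, k) \<in> Q1 j \<union> Q2 j \<and> k \<in> D1 \<union> D2}
           \<union> (if \<exists>k \<in> D1 \<union> D2. (0, k) \<in> Q1 j \<union> Q2 j then {} else {(0, -1)}))
      (\<lambda>k. if k \<in> D1 then P1 k else P2 k)"

definition mk_amodel :: "int set \<Rightarrow> ('ag \<Rightarrow> (int \<times> int) set) \<Rightarrow> (int \<Rightarrow> ('ag, 'p) fm)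
    \<Rightarrow> ('ag, int, 'p) amodel" where
  "mk_amodel D Q P = \<lparr> AE = {0, -1} \<union> D, AQ = Q, Apre = P \<rparr>"

end

theory Submission
  imports Defs
begin

(* Truth of a formula f at a point (x, e) of a product update depends only on the successors of
   e for the target agents of f, and below them only on a successor-closed part of the action
   model.  U_phi is built so that its root 0 has successors in D exactly for the agents in ta phi.
   For B_i psi the fresh event m then looks, for every agent other than i, like the root of U_psi,
   and i is not a target agent of psi; for a conjunction, each conjunct only sees its own half
   of the combined model because the target agents are disjoint.  Truth at a generated point,
   finally, is unaffected by the restriction to the generated part. *)

text \<open>The valuation is deliberately not restricted to \<^const>\<open>upd_T\<close>: truth of atoms
  then does not depend on the event.\<close>
definition upd_full :: "('ag, 's, 'p) kmodel \<Rightarrow> ('ag, 'e, 'p) amodel \<Rightarrow> ('ag, 's \<times> 'e, 'p) kmodel" where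
  "upd_full M U =
    \<lparr> St = upd_T M U,
      Rel = (\<lambda>i. {((x, \<beta>), (u, \<gamma>)). (u, \<gamma>) \<in> upd_T M U \<and> (x, u) \<in> Rel M i \<and> (\<beta>, \<gamma>) \<in> AQ U i}),
      Val = (\<lambda>p. {(x, \<beta>). x \<in> Val M p}) \<rparr>"

declare Image_singleton [simp del]

lemma sat_top [simp]: "sat M w top"
  by (simp add: top_def)

lemma upd_states_subset_upd_T: "upd_states M U w \<alpha> \<subseteq> upd_T M U"
  by (clarify, erule upd_states.induct) auto

lemma sat_upd_iff_upd_full:
  assumes "s \<in> upd_states M U w \<alpha>"
  shows "sat (upd M U w \<alpha>) s f \<longleftrightarrow> sat (upd_full M U) s f"
  using assms
proof (induction f arbitrary: s)
  case (Bel i f)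
  have "(s, t) \<in> Rel (upd M U w \<alpha>) i \<longleftrightarrow> (s, t) \<in> Rel (upd_full M U) i" for t
    using Bel.prems upd_states_subset_upd_T[of M U w \<alpha>]
    by (cases s; cases t) (auto simp: upd_def upd_full_def intro: upd_states.step)
  moreover have "t \<in> upd_states M U w \<alpha>" if "(s, t) \<in> Rel (upd_full M U) i" for t
    using Bel.prems that by (cases s; cases t) (auto simp: upd_full_def intro: upd_states.step)
  ultimately show ?case
    using Bel.IH by auto
qed (auto simp: upd_def upd_full_def)

lemma sat_upd_full_propositional:
  "propositional f \<Longrightarrow> sat (upd_full M U) (x, e) f \<longleftrightarrow> sat M x f"
  by (induction f) (auto simp: upd_full_def)

definition agree_closed :: "'e set \<Rightarrow> ('ag, 'e, 'p) amodel \<Rightarrow> ('ag, 'e, 'p) amodel \<Rightarrow> bool" where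
  "agree_closed S U U' \<longleftrightarrow> S \<subseteq> AE U \<inter> AE U' \<and>
     (\<forall>e\<in>S. Apre U e = Apre U' e \<and> (\<forall>j. AQ U j `` {e} = AQ U' j `` {e} \<and> AQ U' j `` {e} \<subseteq> S))"

lemma sat_upd_full_agree_closed:
  assumes agree: "agree_closed S U U'"
    and root: "\<forall>j\<in>ta f. AQ U j `` {e} = AQ U' j `` {e'} \<and> AQ U' j `` {e'} \<subseteq> S"
  shows "sat (upd_full M U) (x, e) f \<longleftrightarrow> sat (upd_full M U') (x, e') f"
  using root
proof (induction f arbitrary: x e e')
  case (Bel i f)
  have succ: "AQ U i `` {e} = AQ U' i `` {e'}" "AQ U' i `` {e'} \<subseteq> S"
    using Bel.prems by auto
  have "((x, e), (u, \<gamma>)) \<in> Rel (upd_full M U) i \<longleftrightarrow> ((x, e'), (u, \<gamma>)) \<in> Rel (upd_full M U') i"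
    for u \<gamma>
    using succ agree by (auto simp: upd_full_def upd_T_def agree_closed_def)
  moreover have "sat (upd_full M U) (u, \<gamma>) f \<longleftrightarrow> sat (upd_full M U') (u, \<gamma>) f" if "\<gamma> \<in> S" for u \<gamma>
    using Bel.IH[of \<gamma> \<gamma>] that agree by (auto simp: agree_closed_def)
  moreover have "\<gamma> \<in> S" if "((x, e'), (u, \<gamma>)) \<in> Rel (upd_full M U') i" for u \<gamma>
    using that succ by (auto simp: upd_full_def)
  ultimately show ?case
    by simp
next
  case (Conj f1 f2)
  then show ?case
    by (metis UnCI sat.simps(3) ta.simps(3))
qed (auto simp: upd_full_def)

lemma mk_amodel_simps [simp]:
  "AE (mk_amodel D Q P) = {0, -1} \<union> D" "AQ (mk_amodel D Q P) = Q" "Apre (mk_amodel D Q P) = P"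
  by (simp_all add: mk_amodel_def)

lemma under_Image: "under R `` {e} = (if e = 0 then {} else R `` {e} - {0})"
  by (auto simp: under_def)

definition bel_rel :: "'ag \<Rightarrow> int \<Rightarrow> ('ag \<Rightarrow> (int \<times> int) set) \<Rightarrow> 'ag \<Rightarrow> (int \<times> int) set" where
  "bel_rel i m Q =
    (\<lambda>j. if j = i then under (Q i) \<union> {(0, m), (m, m)}
         else under (Q j) \<union> {(0, -1)} \<union> {(m, k) | k. (0, k) \<in> Q j})"

definition conj_rel :: "int set \<Rightarrow> int set \<Rightarrow> ('ag \<Rightarrow> (int \<times> int) set) \<Rightarrow> ('ag \<Rightarrow> (int \<times> int) set)
    \<Rightarrow> 'ag \<Rightarrow> (int \<times> int) set" where
  "conj_rel D1 D2 Q1 Q2 =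
    (\<lambda>j. under (Q1 j) \<union> under (Q2 j)
         \<union> {(0, k) | k. (0, k) \<in> Q1 j \<union> Q2 j \<and> k \<in> D1 \<union> D2}
         \<union> (if \<exists>k \<in> D1 \<union> D2. (0, k) \<in> Q1 j \<union> Q2 j then {} else {(0, -1)}))"

lemma bel_rel_Image:
  "bel_rel i m Q j `` {e} =
     under (Q j) `` {e}
     \<union> (if e = 0 then (if j = i then {m} else {-1}) else {})
     \<union> (if e = m then (if j = i then {m} else Q j `` {0}) else {})"
  by (auto simp: bel_rel_def)

lemma bel_rel_from_0_iff: "m \<noteq> 0 \<Longrightarrow> (0, \<gamma>) \<in> bel_rel i m Q i \<longleftrightarrow> \<gamma> = m"
  by (auto simp: bel_rel_def under_def)

lemma conj_rel_Image:
  "conj_rel D1 D2 Q1 Q2 j `` {e} =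
     (if e \<noteq> 0 then (Q1 j `` {e} \<union> Q2 j `` {e}) - {0}
      else if (Q1 j `` {0} \<union> Q2 j `` {0}) \<inter> (D1 \<union> D2) = {} then {-1}
      else (Q1 j `` {0} \<union> Q2 j `` {0}) \<inter> (D1 \<union> D2))"
  by (auto simp: conj_rel_def under_def)

lemma conj_rel_commute: "conj_rel D1 D2 Q1 Q2 = conj_rel D2 D1 Q2 Q1"
  by (simp add: conj_rel_def Un_ac)

lemma mkU_induct [consumes 1, case_names base bel belc conj]:
  assumes "mkU \<phi> D Q P"
    and "\<And>\<xi> m i. propositional \<xi> \<Longrightarrow> 1 \<le> m \<Longrightarrow>
      R (Bel i \<xi>) {m}
        (\<lambda>j. if j = i then {(0, m), (m, m), (-1, -1)} else {(0, -1), (m, -1), (-1, -1)})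
        ((\<lambda>_. top)(m := \<xi>))"
    and "\<And>\<psi> D Q P m i. dbi_normal \<psi> \<Longrightarrow> mkU \<psi> D Q P \<Longrightarrow> R \<psi> D Q P \<Longrightarrow> 1 \<le> m \<Longrightarrow> m \<notin> D \<Longrightarrow>
      R (Bel i \<psi>) (insert m D) (bel_rel i m Q) (P(m := top))"
    and "\<And>\<xi> \<psi> D Q P m i. propositional \<xi> \<Longrightarrow> dbi_normal \<psi> \<Longrightarrow> mkU \<psi> D Q P \<Longrightarrow> R \<psi> D Q P \<Longrightarrow>
      1 \<le> m \<Longrightarrow> m \<notin> D \<Longrightarrow> R (Bel i (Conj \<xi> \<psi>)) (insert m D) (bel_rel i m Q) (P(m := \<xi>))"
    and "\<And>\<psi> \<theta> D1 Q1 P1 D2 Q2 P2. dbi_normal \<psi> \<Longrightarrow> dbi_normal \<theta> \<Longrightarrow>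
      mkU \<psi> D1 Q1 P1 \<Longrightarrow> R \<psi> D1 Q1 P1 \<Longrightarrow> mkU \<theta> D2 Q2 P2 \<Longrightarrow> R \<theta> D2 Q2 P2 \<Longrightarrow>
      D1 \<inter> D2 = {} \<Longrightarrow>
      R (Conj \<psi> \<theta>) (D1 \<union> D2) (conj_rel D1 D2 Q1 Q2) (\<lambda>k. if k \<in> D1 then P1 k else P2 k)"
  shows "R \<phi> D Q P"
  using assms(1)
  by induction (rule assms(2-5)[unfolded bel_rel_def conj_rel_def]; assumption)+

definition wf_U :: "('ag, 'p) fm \<Rightarrow> int set \<Rightarrow> ('ag \<Rightarrow> (int \<times> int) set) \<Rightarrow> (int \<Rightarrow> ('ag, 'p) fm)
    \<Rightarrow> bool" where
  "wf_U \<phi> D Q P \<longleftrightarrow> finite D \<and> D \<subseteq> {1..} \<and> P 0 = top \<and> P (-1) = top \<and>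
     (\<forall>j. Q j \<subseteq> insert 0 (insert (-1) D) \<times> insert (-1) D \<and> Q j `` {-1} = {-1} \<and>
       (if j \<in> ta \<phi> then Q j `` {0} \<subseteq> D \<and> Q j `` {0} \<noteq> {} else Q j `` {0} = {-1}))"

lemma
  assumes "wf_U \<phi> D Q P"
  shows wf_U_finite: "finite D"
    and wf_U_pos: "D \<subseteq> {1..}"
    and wf_U_zero_notin: "0 \<notin> D"
    and wf_U_minus_one_notin: "-1 \<notin> D"
    and wf_U_pre_zero: "P 0 = top"
    and wf_U_pre_minus_one: "P (-1) = top"
    and wf_U_rel_subset: "Q j \<subseteq> insert 0 (insert (-1) D) \<times> insert (-1) D"
    and wf_U_Image_minus_one: "Q j `` {-1} = {-1}"
    and wf_U_Image_zero_ta: "j \<in> ta \<phi> \<Longrightarrow> Q j `` {0} \<subseteq> D \<and> Q j `` {0} \<noteq> {}"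
    and wf_U_Image_zero_not_ta: "j \<notin> ta \<phi> \<Longrightarrow> Q j `` {0} = {-1}"
  using assms unfolding wf_U_def by auto

lemma wf_U_Image_subset: "wf_U \<phi> D Q P \<Longrightarrow> Q j `` {e} \<subseteq> insert (-1) D"
  using wf_U_rel_subset[of \<phi> D Q P j] by blast

lemma wf_U_Image_outside:
  "wf_U \<phi> D Q P \<Longrightarrow> e \<notin> insert 0 (insert (-1) D) \<Longrightarrow> Q j `` {e} = {}"
  using wf_U_rel_subset[of \<phi> D Q P j] by blast

lemma wf_U_bel:
  assumes wf: "wf_U \<psi> D Q P" and m: "1 \<le> m" "m \<notin> D"
  shows "wf_U (Bel i \<chi>) (insert m D) (bel_rel i m Q) (P(m := \<pi>))"
  unfolding wf_U_def
proof (intro conjI allI)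
  fix j
  show "bel_rel i m Q j \<subseteq> insert 0 (insert (-1) (insert m D)) \<times> insert (-1) (insert m D)"
  proof -
    have "bel_rel i m Q j \<subseteq> Q j \<union> {(0, m), (m, m), (0, -1)} \<union> {m} \<times> Q j `` {0}"
      by (auto simp: bel_rel_def under_def Image_iff)
    moreover have "Q j \<subseteq> insert 0 (insert (-1) D) \<times> insert (-1) D"
      by (rule wf_U_rel_subset[OF wf])
    ultimately show ?thesis
      by blast
  qed
  show "bel_rel i m Q j `` {-1} = {-1}"
    using wf_U_Image_minus_one[OF wf, of j] m by (simp add: bel_rel_Image under_Image)
  show "if j \<in> ta (Bel i \<chi>) then bel_rel i m Q j `` {0} \<subseteq> insert m D \<and> bel_rel i m Q j `` {0} \<noteq> {}
        else bel_rel i m Q j `` {0} = {-1}"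
    using m by (simp add: bel_rel_Image under_Image)
qed (use wf_U_finite[OF wf] wf_U_pos[OF wf] wf_U_pre_zero[OF wf] wf_U_pre_minus_one[OF wf] m in auto)

lemma wf_U_conj:
  assumes wf1: "wf_U \<psi> D1 Q1 P1" and wf2: "wf_U \<theta> D2 Q2 P2"
  shows "wf_U (Conj \<psi> \<theta>) (D1 \<union> D2) (conj_rel D1 D2 Q1 Q2) (\<lambda>k. if k \<in> D1 then P1 k else P2 k)"
  unfolding wf_U_def
proof (intro conjI allI)
  fix j
  show "conj_rel D1 D2 Q1 Q2 j \<subseteq> insert 0 (insert (-1) (D1 \<union> D2)) \<times> insert (-1) (D1 \<union> D2)"
  proof -
    have "conj_rel D1 D2 Q1 Q2 j \<subseteq> Q1 j \<union> Q2 j \<union> {(0, -1)}"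
      by (auto simp: conj_rel_def under_def)
    moreover have "Q1 j \<subseteq> insert 0 (insert (-1) D1) \<times> insert (-1) D1"
      "Q2 j \<subseteq> insert 0 (insert (-1) D2) \<times> insert (-1) D2"
      by (rule wf_U_rel_subset[OF wf1], rule wf_U_rel_subset[OF wf2])
    ultimately show ?thesis
      by blast
  qed
  show "conj_rel D1 D2 Q1 Q2 j `` {-1} = {-1}"
    using wf_U_Image_minus_one[OF wf1, of j] wf_U_Image_minus_one[OF wf2, of j]
    by (simp add: conj_rel_Image)
  show "if j \<in> ta (Conj \<psi> \<theta>)
          then conj_rel D1 D2 Q1 Q2 j `` {0} \<subseteq> D1 \<union> D2 \<and> conj_rel D1 D2 Q1 Q2 j `` {0} \<noteq> {}
        else conj_rel D1 D2 Q1 Q2 j `` {0} = {-1}"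
    using wf_U_zero_notin[OF wf1] wf_U_minus_one_notin[OF wf1]
      wf_U_Image_zero_ta[OF wf1, of j] wf_U_Image_zero_not_ta[OF wf1, of j]
      wf_U_zero_notin[OF wf2] wf_U_minus_one_notin[OF wf2]
      wf_U_Image_zero_ta[OF wf2, of j] wf_U_Image_zero_not_ta[OF wf2, of j]
    by (auto simp: conj_rel_Image)
qed (use wf_U_finite[OF wf1] wf_U_finite[OF wf2] wf_U_pos[OF wf1] wf_U_pos[OF wf2]
    wf_U_zero_notin[OF wf1] wf_U_minus_one_notin[OF wf1] wf_U_pre_zero[OF wf2] wf_U_pre_minus_one[OF wf2]
    in auto)

lemma mkU_wf_U: "mkU \<phi> D Q P \<Longrightarrow> wf_U \<phi> D Q P"
proof (induction rule: mkU_induct)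
  case (base \<xi> m i)
  then show ?case
    by (auto simp: wf_U_def Image_singleton)
qed (blast intro: wf_U_bel wf_U_conj)+

lemma propositional_ta: "propositional f \<Longrightarrow> ta f = {}"
  by (induction f) auto

lemma dbi_normal_not_propositional: "dbi_normal f \<Longrightarrow> \<not> propositional f"
  by (induction rule: dbi_normal.induct) auto

lemma dbi_normal_Bel_ta: "dbi_normal (Bel i \<phi>) \<Longrightarrow> \<not> propositional \<phi> \<Longrightarrow> i \<notin> ta \<phi>"
  by (cases rule: dbi_normal.cases) (auto simp: propositional_ta)

lemma dbi_normal_Conj_ta: "dbi_normal (Conj \<psi> \<theta>) \<Longrightarrow> ta \<psi> \<inter> ta \<theta> = {}"
  by (cases rule: dbi_normal.cases) auto

lemma sat_upd_full_BelI:
  assumes "\<And>u \<gamma>. (e, \<gamma>) \<in> AQ U i \<Longrightarrow> sat M u (Apre U \<gamma>) \<Longrightarrow> sat (upd_full M U) (u, \<gamma>) f"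
  shows "sat (upd_full M U) (x, e) (Bel i f)"
  using assms by (auto simp: upd_full_def upd_T_def)

text \<open>The fresh event m plays, for the agents other than i, the role that 0 plays in the
  smaller model.\<close>
lemma sat_upd_full_bel_rel:
  assumes wf: "wf_U \<psi> D Q P" and m: "1 \<le> m" "m \<notin> D" and i: "i \<notin> ta \<psi>"
  shows "sat (upd_full M (mk_amodel (insert m D) (bel_rel i m Q) (P(m := \<pi>)))) (u, m) \<psi>
     \<longleftrightarrow> sat (upd_full M (mk_amodel D Q P)) (u, 0) \<psi>"
proof (rule sat_upd_full_agree_closed)
  have "bel_rel i m Q j `` {e} = Q j `` {e}" if "e \<in> insert (-1) D" for j e
    using that m wf_U_Image_subset[OF wf, of j e] wf_U_zero_notin[OF wf] wf_U_minus_one_notin[OF wf]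
    by (auto simp: bel_rel_Image under_Image)
  then show "agree_closed (insert (-1) D) (mk_amodel (insert m D) (bel_rel i m Q) (P(m := \<pi>)))
      (mk_amodel D Q P)"
    using m wf_U_Image_subset[OF wf] by (auto simp: agree_closed_def)
  have "bel_rel i m Q j `` {m} = Q j `` {0}" if "j \<in> ta \<psi>" for j
    using that i m wf_U_Image_outside[OF wf, of m j] by (auto simp: bel_rel_Image under_Image)
  then show "\<forall>j\<in>ta \<psi>. AQ (mk_amodel (insert m D) (bel_rel i m Q) (P(m := \<pi>))) j `` {m}
      = AQ (mk_amodel D Q P) j `` {0} \<and> AQ (mk_amodel D Q P) j `` {0} \<subseteq> insert (-1) D"
    using wf_U_Image_subset[OF wf] by simp
qed

lemma sat_upd_full_conj_rel:
  assumes wf1: "wf_U \<psi> D1 Q1 P1" and wf2: "wf_U \<theta> D2 Q2 P2"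
    and disj: "D1 \<inter> D2 = {}" "ta \<psi> \<inter> ta \<theta> = {}"
    and pre: "\<forall>k\<in>insert (-1) D1. P k = P1 k"
  shows "sat (upd_full M (mk_amodel (D1 \<union> D2) (conj_rel D1 D2 Q1 Q2) P)) (x, 0) \<psi>
     \<longleftrightarrow> sat (upd_full M (mk_amodel D1 Q1 P1)) (x, 0) \<psi>"
proof (rule sat_upd_full_agree_closed)
  have "conj_rel D1 D2 Q1 Q2 j `` {e} = Q1 j `` {e}" if "e \<in> insert (-1) D1" for j e
  proof -
    have "Q2 j `` {e} \<subseteq> Q1 j `` {e}"
      using that disj(1) wf_U_zero_notin[OF wf1] wf_U_Image_outside[OF wf2, of e j]
        wf_U_Image_minus_one[OF wf1, of j] wf_U_Image_minus_one[OF wf2, of j]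
      by auto
    then show ?thesis
      using that wf_U_Image_subset[OF wf1, of j e] wf_U_zero_notin[OF wf1] by (auto simp: conj_rel_Image)
  qed
  then show "agree_closed (insert (-1) D1) (mk_amodel (D1 \<union> D2) (conj_rel D1 D2 Q1 Q2) P)
      (mk_amodel D1 Q1 P1)"
    using pre wf_U_Image_subset[OF wf1] by (auto simp: agree_closed_def)
  have "conj_rel D1 D2 Q1 Q2 j `` {0} = Q1 j `` {0}" if "j \<in> ta \<psi>" for j
  proof -
    have "Q2 j `` {0} = {-1}"
      using that disj(2) wf_U_Image_zero_not_ta[OF wf2, of j] by auto
    then show ?thesis
      using that wf_U_Image_zero_ta[OF wf1, of j]
        wf_U_minus_one_notin[OF wf1] wf_U_minus_one_notin[OF wf2]
      by (auto simp: conj_rel_Image)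
  qed
  then show "\<forall>j\<in>ta \<psi>. AQ (mk_amodel (D1 \<union> D2) (conj_rel D1 D2 Q1 Q2) P) j `` {0}
      = AQ (mk_amodel D1 Q1 P1) j `` {0} \<and> AQ (mk_amodel D1 Q1 P1) j `` {0} \<subseteq> insert (-1) D1"
    using wf_U_Image_subset[OF wf1] by simp
qed

lemma sat_upd_full_Bel_bel_rel:
  assumes "1 \<le> m"
    and "\<And>u. sat M u \<pi> \<Longrightarrow> sat (upd_full M (mk_amodel (insert m D) (bel_rel i m Q) (P(m := \<pi>)))) (u, m) f"
  shows "sat (upd_full M (mk_amodel (insert m D) (bel_rel i m Q) (P(m := \<pi>)))) (x, 0) (Bel i f)"
proof (rule sat_upd_full_BelI)
  fix u \<gamma>
  assume "(0, \<gamma>) \<in> AQ (mk_amodel (insert m D) (bel_rel i m Q) (P(m := \<pi>))) i"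
    and "sat M u (Apre (mk_amodel (insert m D) (bel_rel i m Q) (P(m := \<pi>))) \<gamma>)"
  then have "\<gamma> = m" and "sat M u \<pi>"
    using assms(1) by (simp_all add: bel_rel_from_0_iff)
  then show "sat (upd_full M (mk_amodel (insert m D) (bel_rel i m Q) (P(m := \<pi>)))) (u, \<gamma>) f"
    using assms(2) by simp
qed

lemma sat_upd_full_Conj_conj_rel:
  assumes wf1: "wf_U \<psi> D1 Q1 P1" and wf2: "wf_U \<theta> D2 Q2 P2"
    and disj: "D1 \<inter> D2 = {}" "ta \<psi> \<inter> ta \<theta> = {}"
    and sat1: "sat (upd_full M (mk_amodel D1 Q1 P1)) (x, 0) \<psi>"
    and sat2: "sat (upd_full M (mk_amodel D2 Q2 P2)) (x, 0) \<theta>"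
  shows "sat (upd_full M (mk_amodel (D1 \<union> D2) (conj_rel D1 D2 Q1 Q2) (\<lambda>k. if k \<in> D1 then P1 k else P2 k)))
    (x, 0) (Conj \<psi> \<theta>)" (is "sat (upd_full M (mk_amodel _ _ ?P)) _ _")
proof -
  have pre1: "\<forall>k\<in>insert (-1) D1. ?P k = P1 k"
    using wf_U_minus_one_notin[OF wf1] wf_U_pre_minus_one[OF wf1] wf_U_pre_minus_one[OF wf2] by auto
  have pre2: "\<forall>k\<in>insert (-1) D2. ?P k = P2 k"
    using disj(1) wf_U_minus_one_notin[OF wf1] by auto
  have disj': "D2 \<inter> D1 = {}" "ta \<theta> \<inter> ta \<psi> = {}"
    using disj by blast+
  have swap: "mk_amodel (D2 \<union> D1) (conj_rel D2 D1 Q2 Q1) ?P = mk_amodel (D1 \<union> D2) (conj_rel D1 D2 Q1 Q2) ?P"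
    by (simp only: conj_rel_commute[of D2] Un_commute[of D2])
  have "sat (upd_full M (mk_amodel (D1 \<union> D2) (conj_rel D1 D2 Q1 Q2) ?P)) (x, 0) \<psi>"
    unfolding sat_upd_full_conj_rel[OF wf1 wf2 disj pre1] by (rule sat1)
  moreover have "sat (upd_full M (mk_amodel (D1 \<union> D2) (conj_rel D1 D2 Q1 Q2) ?P)) (x, 0) \<theta>"
    unfolding swap[symmetric] sat_upd_full_conj_rel[OF wf2 wf1 disj' pre2] by (rule sat2)
  ultimately show ?thesis
    by simp
qed

lemma mkU_sat: "mkU \<phi> D Q P \<Longrightarrow> dbi_normal \<phi> \<Longrightarrow> sat (upd_full M (mk_amodel D Q P)) (x, 0) \<phi>"
proof (induction arbitrary: x rule: mkU_induct)
  case (base \<xi> m i)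
  then show ?case
    by (intro sat_upd_full_BelI) (auto simp: sat_upd_full_propositional)
next
  case (bel \<psi> D Q P m i)
  have i: "i \<notin> ta \<psi>"
    using dbi_normal_Bel_ta[OF bel.prems dbi_normal_not_propositional[OF bel.hyps(1)]] .
  show ?case
    by (rule sat_upd_full_Bel_bel_rel[OF bel.hyps(3)])
      (unfold sat_upd_full_bel_rel[OF mkU_wf_U[OF bel.hyps(2)] bel.hyps(3,4) i],
        rule bel.IH[OF bel.hyps(1)])
next
  case (belc \<xi> \<psi> D Q P m i)
  have i: "i \<notin> ta \<psi>"
    using dbi_normal_Bel_ta[OF belc.prems] dbi_normal_not_propositional[OF belc.hyps(2)]
      propositional_ta[OF belc.hyps(1)] by auto
  show ?case
    by (rule sat_upd_full_Bel_bel_rel[OF belc.hyps(4)])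
      (unfold sat.simps(3) sat_upd_full_propositional[OF belc.hyps(1)]
        sat_upd_full_bel_rel[OF mkU_wf_U[OF belc.hyps(3)] belc.hyps(4,5) i],
        blast intro: belc.IH[OF belc.hyps(2)])
next
  case (conj \<psi> \<theta> D1 Q1 P1 D2 Q2 P2)
  show ?case
    using sat_upd_full_Conj_conj_rel[OF mkU_wf_U[OF conj.hyps(3)] mkU_wf_U[OF conj.hyps(4)] conj.hyps(5)
        dbi_normal_Conj_ta[OF conj.prems] conj.IH(1)[OF conj.hyps(1)] conj.IH(2)[OF conj.hyps(2)]] .
qed

lemma ex_fresh_int:
  assumes "finite (F :: int set)"
  shows "\<exists>m \<ge> 1. m \<notin> F"
proof -
  have "infinite ({1..} - F)"
    using Diff_infinite_finite[OF assms infinite_Ici] .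
  then obtain m where "m \<in> {1..} - F"
    using infinite_imp_nonempty by blast
  then show ?thesis
    by auto
qed

lemma ex_mkU_avoiding: "dbi_normal \<phi> \<Longrightarrow> finite F \<Longrightarrow> \<exists>D Q P. mkU \<phi> D Q P \<and> D \<inter> F = {}"
proof (induction arbitrary: F rule: dbi_normal.induct)
  case (nprop \<xi> i)
  obtain m where "1 \<le> m" "m \<notin> F"
    using ex_fresh_int[OF nprop.prems] by blast
  have "{m} \<inter> F = {}"
    using \<open>m \<notin> F\<close> by blast
  with mkU.ubase[OF nprop.hyps \<open>1 \<le> m\<close>, of i] show ?case
    by blast
next
  case (bel \<phi> i)
  obtain D Q P where mk: "mkU \<phi> D Q P" and "D \<inter> F = {}"
    using bel.IH[OF bel.prems] by blast
  moreover obtain m where "1 \<le> m" "m \<notin> F \<union> D"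
    using ex_fresh_int[of "F \<union> D"] bel.prems wf_U_finite[OF mkU_wf_U[OF mk]] by blast
  ultimately have "mkU (Bel i \<phi>) (insert m D) (bel_rel i m Q) (P(m := top))"
    and "insert m D \<inter> F = {}"
    using mkU.bel[OF bel.hyps(1) mk, of m i] unfolding bel_rel_def by blast+
  then show ?case
    by blast
next
  case (belc \<xi> \<phi> i)
  obtain D Q P where mk: "mkU \<phi> D Q P" and "D \<inter> F = {}"
    using belc.IH[OF belc.prems] by blast
  moreover obtain m where "1 \<le> m" "m \<notin> F \<union> D"
    using ex_fresh_int[of "F \<union> D"] belc.prems wf_U_finite[OF mkU_wf_U[OF mk]] by blast
  ultimately have "mkU (Bel i (Conj \<xi> \<phi>)) (insert m D) (bel_rel i m Q) (P(m := \<xi>))"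
    and "insert m D \<inter> F = {}"
    using mkU.belc[OF belc.hyps(1,2) mk, of m i] unfolding bel_rel_def by blast+
  then show ?case
    by blast
next
  case (conj \<phi> \<psi>)
  obtain D1 Q1 P1 where mk1: "mkU \<phi> D1 Q1 P1" and "D1 \<inter> F = {}"
    using conj.IH(1)[OF conj.prems] by blast
  moreover obtain D2 Q2 P2 where mk2: "mkU \<psi> D2 Q2 P2" and "D2 \<inter> (F \<union> D1) = {}"
    using conj.IH(2)[of "F \<union> D1"] conj.prems wf_U_finite[OF mkU_wf_U[OF mk1]] by blast
  ultimately have "mkU (Conj \<phi> \<psi>) (D1 \<union> D2) (conj_rel D1 D2 Q1 Q2) (\<lambda>k. if k \<in> D1 then P1 k else P2 k)"
    and "(D1 \<union> D2) \<inter> F = {}"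
    using mkU.conj[OF conj.hyps(1,2) mk1 mk2] unfolding conj_rel_def by blast+
  then show ?case
    by blast
qed

theorem theorem4:
  fixes M :: "('ag :: finite, 's, 'p) kmodel" and v :: 's and \<phi> :: "('ag, 'p) fm"
  assumes "2 \<le> CARD('ag)"
    and "kripke M" and "v \<in> St M"
    and "dbi_normal \<phi>"
  shows "(\<exists>D Q P. mkU \<phi> D Q P) \<and>
         (\<forall>D Q P. mkU \<phi> D Q P \<longrightarrow>
            upd_defined M (mk_amodel D Q P) v 0 \<and>
            sat (upd M (mk_amodel D Q P) v 0) (v, 0) \<phi>)"
proof (intro conjI allI impI)
  show "\<exists>D Q P. mkU \<phi> D Q P"
    using ex_mkU_avoiding[OF assms(4) finite.emptyI] by blast
  fix D Q P
  assume mk: "mkU \<phi> D Q P"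
  have "P 0 = top"
    using wf_U_pre_zero[OF mkU_wf_U[OF mk]] .
  then show "upd_defined M (mk_amodel D Q P) v 0"
    by (simp add: upd_defined_def)
  have root: "(v, 0) \<in> upd_states M (mk_amodel D Q P) v 0"
    using \<open>P 0 = top\<close> assms(3) by (simp add: upd_T_def upd_states.base)
  show "sat (upd M (mk_amodel D Q P) v 0) (v, 0) \<phi>"
    using sat_upd_iff_upd_full[OF root] mkU_sat[OF mk assms(4)] by simp
qed

end
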